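(* Let $S$ (students) and $C$ (colleges) be finite disjoint sets with preferences and capacities as described in the context, and let $\mu,\mu'$ be two stable many-to-one matchings on $S\cup C$. Suppose $s\in S$ satisfies $\mu'(s)\succ_s\mu(s)$. Then $s$ belongs to a preference cycle $s_0c_0s_1c_1\dots s_kc_ks_0$ which is $(S,\mu)$-dominated and $(S,\mu')$-dominating, and every college $c_i$ in this cycle satisfies $|\mu(c_i)|=|\mu'(c_i)|=q_{c_i}$.
   Context: Each student $s\in S$ has a strict preference order $\succ_s$ over $C\cup\{\emptyset\}$, $\emptyset$ being the outside option. Each college $c\in C$ has a capacity $q_c\in\mathbb{Z}_{\geq 1}$ and a strict ranking $\succ_c$ over $S\cup\{\emptyset\}$; $c$ likes $s$ if $s\succ_c\emptyset$. College preferences over sets of students are responsive to this ranking: for any set $A\subseteq S$ and distinct $s_1,s_2\notin A$, $c$ prefers $A\cup\{s_1\}$ to $A\cup\{s_2\}$ iff $s_1\succ_c s_2$. A many-to-one matching is a map $\mu$ with $\mu(s)\in C\cup\{\emptyset\}$ for $s\in S$ and $\mu(c)=\{s\in S:\mu(s)=c\}$ for $c\in C$. It is individually rational if $\mu(s)\succ_s\emptyset$ whenever $\mu(s)\neq\emptyset$, every $c$ likes every student in $\mu(c)$, and $|\mu(c)|\le q_c$ for all $c$. A pair $(s,c)\in S\times C$ blocks $\mu$ if $c\succ_s\mu(s)$ and either $s\succ_c s'$ for some $s'\in\mu(c)$, or $c$ likes $s$ and $|\mu(c)|<q_c$. $\mu$ is stable if it is individually rational and has no blocking pair. A preference cycle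 is a cyclic list $s_0c_0s_1c_1\dots s_kc_ks_0$ of pairwise distinct agents, $s_i\in S$, $c_i\in C$, such that each agent strictly prefers (according to its ranking) its successor in the cycle to its predecessor. For a matching $\mu$ and $X\in\{S,C\}$, a preference cycle is $(X,\mu)$-dominated if for every agent $a\in X$ in the cycle: if $a\in S$, its predecessor is $\mu(a)$; if $a\in C$, its predecessor belongs to $\mu(a)$. It is $(X,\mu)$-dominating if the same holds with "successor" in place of "predecessor". *)

theory Defs
  imports Main
begin

(* Students have type 's, colleges type 'c (so S and C are disjoint).
   The outside option \<emptyset> is represented by None.
   ps s x y : student s strictly prefers x to y   (x y :: 'c option)
   pc c x y : college c strictly prefers x to y   (x y :: 's option)
   q c      : capacity of college c
   mu s     : the partner of student s (None = unmatched)              *)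

definition strict_total_on :: "'a set \<Rightarrow> ('a \<Rightarrow> 'a \<Rightarrow> bool) \<Rightarrow> bool" where
  "strict_total_on A R \<longleftrightarrow>
     (\<forall>x\<in>A. \<not> R x x) \<and>
     (\<forall>x\<in>A. \<forall>y\<in>A. \<forall>z\<in>A. R x y \<longrightarrow> R y z \<longrightarrow> R x z) \<and>
     (\<forall>x\<in>A. \<forall>y\<in>A. x \<noteq> y \<longrightarrow> R x y \<or> R y x)"

definition market ::
  "'s set \<Rightarrow> 'c set \<Rightarrow> ('s \<Rightarrow> 'c option \<Rightarrow> 'c option \<Rightarrow> bool)
   \<Rightarrow> ('c \<Rightarrow> 's option \<Rightarrow> 's option \<Rightarrow> bool) \<Rightarrow> ('c \<Rightarrow> nat) \<Rightarrow> bool" where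
  "market S C ps pc q \<longleftrightarrow> finite S \<and> finite C \<and>
     (\<forall>s\<in>S. strict_total_on (Some ` C \<union> {None}) (ps s)) \<and>
     (\<forall>c\<in>C. strict_total_on (Some ` S \<union> {None}) (pc c)) \<and>
     (\<forall>c\<in>C. q c \<ge> 1)"

definition assigned :: "'s set \<Rightarrow> ('s \<Rightarrow> 'c option) \<Rightarrow> 'c \<Rightarrow> 's set" where
  "assigned S mu c = {s \<in> S. mu s = Some c}"

definition matching :: "'s set \<Rightarrow> 'c set \<Rightarrow> ('s \<Rightarrow> 'c option) \<Rightarrow> bool" where
  "matching S C mu \<longleftrightarrow> (\<forall>s\<in>S. mu s \<in> Some ` C \<union> {None})"

definition likes :: "('c \<Rightarrow> 's option \<Rightarrow> 's option \<Rightarrow> bool) \<Rightarrow> 'c \<Rightarrow> 's \<Rightarrow> bool" where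
  "likes pc c s \<longleftrightarrow> pc c (Some s) None"

definition individually_rational ::
  "'s set \<Rightarrow> 'c set \<Rightarrow> ('s \<Rightarrow> 'c option \<Rightarrow> 'c option \<Rightarrow> bool)
   \<Rightarrow> ('c \<Rightarrow> 's option \<Rightarrow> 's option \<Rightarrow> bool) \<Rightarrow> ('c \<Rightarrow> nat) \<Rightarrow> ('s \<Rightarrow> 'c option) \<Rightarrow> bool" where
  "individually_rational S C ps pc q mu \<longleftrightarrow>
     (\<forall>s\<in>S. mu s \<noteq> None \<longrightarrow> ps s (mu s) None) \<and>
     (\<forall>c\<in>C. \<forall>s\<in>assigned S mu c. likes pc c s) \<and>
     (\<forall>c\<in>C. card (assigned S mu c) \<le> q c)"

definition blocks ::
  "'s set \<Rightarrow> ('s \<Rightarrow> 'c option \<Rightarrow> 'c option \<Rightarrow> bool)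
   \<Rightarrow> ('c \<Rightarrow> 's option \<Rightarrow> 's option \<Rightarrow> bool) \<Rightarrow> ('c \<Rightarrow> nat) \<Rightarrow> ('s \<Rightarrow> 'c option) \<Rightarrow> 's \<Rightarrow> 'c \<Rightarrow> bool" where
  "blocks S ps pc q mu s c \<longleftrightarrow>
     ps s (Some c) (mu s) \<and>
     ((\<exists>s'\<in>assigned S mu c. pc c (Some s) (Some s')) \<or>
      (likes pc c s \<and> card (assigned S mu c) < q c))"

definition stable ::
  "'s set \<Rightarrow> 'c set \<Rightarrow> ('s \<Rightarrow> 'c option \<Rightarrow> 'c option \<Rightarrow> bool)
   \<Rightarrow> ('c \<Rightarrow> 's option \<Rightarrow> 's option \<Rightarrow> bool) \<Rightarrow> ('c \<Rightarrow> nat) \<Rightarrow> ('s \<Rightarrow> 'c option) \<Rightarrow> bool" where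
  "stable S C ps pc q mu \<longleftrightarrow> matching S C mu \<and> individually_rational S C ps pc q mu \<and>
     (\<forall>s\<in>S. \<forall>c\<in>C. \<not> blocks S ps pc q mu s c)"

(* A preference cycle s_0 c_0 s_1 c_1 ... s_k c_k s_0 is given by the lists
   ss = [s_0,...,s_k] and cs = [c_0,...,c_k] (n = k+1 = length ss = length cs).
   Predecessor of s_i is c_{i-1 mod n}, successor is c_i;
   predecessor of c_i is s_i, successor is s_{i+1 mod n}. *)
definition pref_cycle ::
  "'s set \<Rightarrow> 'c set \<Rightarrow> ('s \<Rightarrow> 'c option \<Rightarrow> 'c option \<Rightarrow> bool)
   \<Rightarrow> ('c \<Rightarrow> 's option \<Rightarrow> 's option \<Rightarrow> bool) \<Rightarrow> 's list \<Rightarrow> 'c list \<Rightarrow> bool" where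
  "pref_cycle S C ps pc ss cs \<longleftrightarrow>
     ss \<noteq> [] \<and> length cs = length ss \<and> distinct ss \<and> distinct cs \<and>
     set ss \<subseteq> S \<and> set cs \<subseteq> C \<and>
     (\<forall>i<length ss. ps (ss ! i) (Some (cs ! i))
                       (Some (cs ! ((i + length ss - 1) mod length ss)))) \<and>
     (\<forall>i<length ss. pc (cs ! i) (Some (ss ! ((i + 1) mod length ss))) (Some (ss ! i)))"

definition S_dominated :: "('s \<Rightarrow> 'c option) \<Rightarrow> 's list \<Rightarrow> 'c list \<Rightarrow> bool" where
  "S_dominated mu ss cs \<longleftrightarrow>
     (\<forall>i<length ss. mu (ss ! i) = Some (cs ! ((i + length ss - 1) mod length ss)))"

definition S_dominating :: "('s \<Rightarrow> 'c option) \<Rightarrow> 's list \<Rightarrow> 'c list \<Rightarrow> bool" where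
  "S_dominating mu ss cs \<longleftrightarrow> (\<forall>i<length ss. mu (ss ! i) = Some (cs ! i))"

end

theory Submission
  imports Defs
begin

text \<open>Call a student improving if she prefers her partner under \<mu>' to her partner under \<mu>.
  Stability of \<mu> forces the new college c of an improving student to be full under \<mu> and to
  prefer all its old students to her; stability of \<mu>' then forces every student leaving c to be
  improving too. Counting seats at c, the improving newcomers at c are no more numerous than the
  leavers, so injections chosen college by college assemble into a permutation f of the finite set
  of improving students with \<mu> (f x) = \<mu>' x. The f-orbit of s is a closed walk; cutting it
  short at repeated colleges yields the preference cycle, and surjectivity of f shows that every
  college on it is full under \<mu>' as well.\<close>

lemma strict_total_on_irrefl: "strict_total_on A R \<Longrightarrow> x \<in> A \<Longrightarrow> \<not> R x x"
  unfolding strict_total_on_def by blast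

lemma strict_total_on_asym:
  "strict_total_on A R \<Longrightarrow> x \<in> A \<Longrightarrow> y \<in> A \<Longrightarrow> R x y \<Longrightarrow> \<not> R y x"
  unfolding strict_total_on_def by blast

lemma strict_total_on_total:
  "strict_total_on A R \<Longrightarrow> x \<in> A \<Longrightarrow> y \<in> A \<Longrightarrow> x \<noteq> y \<Longrightarrow> R x y \<or> R y x"
  unfolding strict_total_on_def by blast

lemma card_Diff_le_card_Diff_iff:
  assumes "finite A" "finite B"
  shows "card (A - B) \<le> card (B - A) \<longleftrightarrow> card A \<le> card B"
proof -
  have "card (A \<inter> B) \<le> card A" "card (A \<inter> B) \<le> card B"
    using assms by (auto intro: card_mono)
  moreover have "card (A - B) = card A - card (A \<inter> B)" "card (B - A) = card B - card (A \<inter> B)"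
    using assms by (auto simp: card_Diff_subset_Int Int_commute)
  ultimately show ?thesis by linarith
qed

lemma bij_betw_funpow_cycle:
  assumes "finite A" "bij_betw f A A" "x \<in> A"
  obtains n where "n > 0" "(f ^^ n) x = x"
proof -
  have bij: "bij_betw (f ^^ n) A A" for n
    using bij_betw_funpow[OF assms(2)] .
  have "\<not> inj_on (\<lambda>k. (f ^^ k) x) {0..card A}"
  proof
    assume "inj_on (\<lambda>k. (f ^^ k) x) {0..card A}"
    then have "card {0..card A} \<le> card A"
      using assms(1,3) bij by (intro card_inj_on_le) (auto simp: bij_betw_def)
    then show False by simp
  qed
  then obtain i j where ij: "i < j" "(f ^^ i) x = (f ^^ j) x"
    unfolding inj_on_def by (metis linorder_neqE_nat)
  have "(f ^^ i) ((f ^^ (j - i)) x) = (f ^^ i) x"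
    using ij by (metis comp_apply funpow_add le_add_diff_inverse less_imp_le)
  then have "(f ^^ (j - i)) x = x"
    using bij[of i] bij[of "j - i"] assms(3) by (auto simp: bij_betw_def dest: inj_onD)
  then show thesis using ij(1) by (intro that[of "j - i"]) auto
qed

definition closed_walk :: "('a \<Rightarrow> 'a \<Rightarrow> bool) \<Rightarrow> 'a list \<Rightarrow> bool" where
  "closed_walk E ws \<longleftrightarrow> ws \<noteq> [] \<and> successively E (ws @ [hd ws])"

lemma closed_walk_nth:
  assumes "closed_walk E ws" "i < length ws"
  shows "E (ws ! i) (ws ! ((i + 1) mod length ws))"
proof -
  have "successively E (ws @ [hd ws])" using assms(1) by (simp add: closed_walk_def)
  from successively_nth[OF this] have "E ((ws @ [hd ws]) ! i) ((ws @ [hd ws]) ! Suc i)"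
    using assms(2) by simp
  then show ?thesis
    using assms by (cases "Suc i = length ws") (auto simp: closed_walk_def nth_append hd_conv_nth)
qed

lemma closed_walk_nth_pred:
  assumes "closed_walk E ws" "i < length ws"
  shows "E (ws ! ((i + length ws - 1) mod length ws)) (ws ! i)"
proof -
  let ?j = "(i + length ws - 1) mod length ws"
  have "Suc (i + length ws - 1) = i + length ws" using assms(2) by simp
  moreover have "length ws > 0" using assms(2) by linarith
  ultimately have "?j < length ws" "(?j + 1) mod length ws = i"
    using assms(2) by (simp_all add: mod_Suc_eq)
  then show ?thesis using closed_walk_nth[OF assms(1), of ?j] by simp
qed

lemma closed_walk_funpow:
  assumes "n > 0" "(f ^^ n) x = x" "\<And>k. E ((f ^^ k) x) (f ((f ^^ k) x))"
  shows "closed_walk E (map (\<lambda>k. (f ^^ k) x) [0..<n])"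
proof -
  define orb where "orb m = map (\<lambda>k. (f ^^ k) x) [0..<m]" for m
  have "orb n @ [hd (orb n)] = orb (Suc n)"
    using assms(1,2) by (simp add: orb_def hd_map)
  moreover have "successively E (orb m)" for m
    using assms(3) by (auto simp: orb_def successively_conv_nth)
  moreover have "orb n \<noteq> []" using assms(1) by (simp add: orb_def)
  ultimately show ?thesis unfolding closed_walk_def orb_def[symmetric] by metis
qed

lemma successively_shortcut:
  assumes "successively E (xs @ a # ys @ b # zs)" "zs \<noteq> []" "E b (hd zs) \<Longrightarrow> E a (hd zs)"
  shows "successively E (xs @ a # zs)"
  using assms by (auto simp: successively_append_iff successively_Cons)

lemma not_distinct_map_decomp:
  "\<not> distinct (map l ws) \<Longrightarrow> \<exists>xs a ys b zs. ws = xs @ a # ys @ b # zs \<and> l a = l b"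
proof (induction ws)
  case (Cons w ws)
  show ?case
  proof (cases "l w \<in> l ` set ws")
    case True
    then obtain b ys zs where "ws = ys @ b # zs" "l w = l b"
      by (metis imageE split_list)
    then show ?thesis by (metis append_Nil)
  next
    case False
    then obtain xs a ys b zs where "ws = xs @ a # ys @ b # zs" "l a = l b"
      using Cons by auto
    then show ?thesis by (metis append_Cons)
  qed
qed simp

text \<open>Cutting out the stretch between two vertices with the same label keeps the walk closed,
  because the label of a vertex determines its successors.\<close>
lemma closed_walk_distinct_labels:
  assumes "closed_walk E ws" "\<And>a b y. l a = l b \<Longrightarrow> E b y \<Longrightarrow> E a y"
  shows "\<exists>vs. closed_walk E vs \<and> hd vs = hd ws \<and> set vs \<subseteq> set ws \<and> distinct (map l vs)"
  using assms(1)
proof (induction "length ws" arbitrary: ws rule: less_induct)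
  case less
  show ?case
  proof (cases "distinct (map l ws)")
    case False
    then obtain xs a ys b zs where ws: "ws = xs @ a # ys @ b # zs" and "l a = l b"
      using not_distinct_map_decomp by blast
    define vs where "vs = xs @ a # zs"
    have "hd vs = hd ws" unfolding vs_def ws by (cases xs) auto
    moreover have "successively E (xs @ a # ys @ b # (zs @ [hd ws]))"
      using less.prems unfolding closed_walk_def ws by simp
    then have "successively E (xs @ a # (zs @ [hd ws]))"
      by (rule successively_shortcut) (use assms(2) \<open>l a = l b\<close> in auto)
    ultimately have "closed_walk E vs" unfolding closed_walk_def vs_def by simp
    moreover have "length vs < length ws" "set vs \<subseteq> set ws" unfolding vs_def ws by auto
    ultimately obtain us where
      "closed_walk E us" "hd us = hd vs" "set us \<subseteq> set vs" "distinct (map l us)"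
      using less.hyps by blast
    then show ?thesis using \<open>hd vs = hd ws\<close> \<open>set vs \<subseteq> set ws\<close> by auto
  qed (use less.prems in blast)
qed

lemma market_student_order:
  "market S C ps pc q \<Longrightarrow> x \<in> S \<Longrightarrow> strict_total_on (Some ` C \<union> {None}) (ps x)"
  unfolding market_def by blast

lemma market_college_order:
  "market S C ps pc q \<Longrightarrow> c \<in> C \<Longrightarrow> strict_total_on (Some ` S \<union> {None}) (pc c)"
  unfolding market_def by blast

lemma stable_within_capacity:
  "stable S C ps pc q mu \<Longrightarrow> c \<in> C \<Longrightarrow> card (assigned S mu c) \<le> q c"
  unfolding stable_def individually_rational_def by blast

lemma improving_student_matched:
  assumes "market S C ps pc q" "matching S C mu" "individually_rational S C ps pc q mu"
    and "matching S C mu'" "x \<in> S" "ps x (mu' x) (mu x)"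
  shows "\<exists>c\<in>C. mu' x = Some c"
proof (rule ccontr)
  assume "\<not> (\<exists>c\<in>C. mu' x = Some c)"
  then have worse: "ps x None (mu x)" using assms(4-6) unfolding matching_def by auto
  have tot: "strict_total_on (Some ` C \<union> {None}) (ps x)"
    using market_student_order[OF assms(1,5)] .
  show False
  proof (cases "mu x")
    case None
    then show False using worse strict_total_on_irrefl[OF tot, of None] by simp
  next
    case (Some d)
    then have "d \<in> C" "ps x (mu x) None"
      using assms(2,3,5) unfolding matching_def individually_rational_def by auto
    then show False using worse Some strict_total_on_asym[OF tot, of "Some d" None] by simp
  qed
qed

lemma stable_envied_college:
  assumes "market S C ps pc q" "stable S C ps pc q mu" "x \<in> S" "c \<in> C"
    and "ps x (Some c) (mu x)" "likes pc c x"
  shows "card (assigned S mu c) = q c" "\<forall>t\<in>assigned S mu c. pc c (Some t) (Some x)"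
proof -
  have no_block: "\<not> blocks S ps pc q mu x c"
    using assms(2-4) unfolding stable_def by blast
  moreover have "card (assigned S mu c) \<le> q c"
    using stable_within_capacity[OF assms(2,4)] .
  ultimately show "card (assigned S mu c) = q c"
    using assms(5,6) unfolding blocks_def by simp
  show "\<forall>t\<in>assigned S mu c. pc c (Some t) (Some x)"
  proof
    fix t assume t: "t \<in> assigned S mu c"
    then have "t \<in> S" "mu t = Some c" unfolding assigned_def by auto
    have "\<not> ps x (Some c) (Some c)"
      using strict_total_on_irrefl[OF market_student_order[OF assms(1,3)]] assms(4) by blast
    then have "t \<noteq> x" using assms(5) \<open>mu t = Some c\<close> by auto
    moreover have "\<not> pc c (Some x) (Some t)" using no_block t assms(5) unfolding blocks_def by blast
    ultimately show "pc c (Some t) (Some x)"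
      using strict_total_on_total[OF market_college_order[OF assms(1,4)], of "Some t" "Some x"]
        \<open>t \<in> S\<close> assms(3) by auto
  qed
qed

lemma stable_student_prefers_partner:
  assumes "market S C ps pc q" "stable S C ps pc q mu" "t \<in> S" "c \<in> C"
    and "x \<in> assigned S mu c" "pc c (Some t) (Some x)" "mu t \<noteq> Some c"
  shows "ps t (mu t) (Some c)"
proof -
  have "\<not> blocks S ps pc q mu t c" using assms(2-4) unfolding stable_def by blast
  then have "\<not> ps t (Some c) (mu t)"
    using assms(5,6) unfolding blocks_def by blast
  moreover have "mu t \<in> Some ` C \<union> {None}" using assms(2,3) unfolding stable_def matching_def by blast
  ultimately show ?thesis
    using strict_total_on_total[OF market_student_order[OF assms(1,3)], of "mu t" "Some c"] assms(4,7)
    by auto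
qed

lemma finite_assigned: "finite S \<Longrightarrow> finite (assigned S mu c)"
  unfolding assigned_def by simp

locale two_stable_matchings =
  fixes S :: "'s set" and C :: "'c set"
    and ps :: "'s \<Rightarrow> 'c option \<Rightarrow> 'c option \<Rightarrow> bool"
    and pc :: "'c \<Rightarrow> 's option \<Rightarrow> 's option \<Rightarrow> bool"
    and q :: "'c \<Rightarrow> nat"
    and mu mu' :: "'s \<Rightarrow> 'c option"
  assumes market: "market S C ps pc q"
    and stable: "stable S C ps pc q mu"
    and stable': "stable S C ps pc q mu'"
begin

definition improving :: "'s set" where
  "improving = {x \<in> S. ps x (mu' x) (mu x)}"

definition arrivals :: "'c \<Rightarrow> 's set" where
  "arrivals c = {x \<in> improving. mu' x = Some c}"

definition departures :: "'c \<Rightarrow> 's set" where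
  "departures c = assigned S mu c - assigned S mu' c"

lemma finite_S: "finite S"
  using market unfolding market_def by blast

lemma finite_improving: "finite improving"
  using finite_S unfolding improving_def by simp

lemma finite_arrivals: "finite (arrivals c)"
  using finite_improving unfolding arrivals_def by simp

lemma improving_matched: "x \<in> improving \<Longrightarrow> \<exists>c\<in>C. mu' x = Some c"
  using improving_student_matched[OF market] stable stable'
  unfolding improving_def stable_def by blast

lemma improving_target:
  assumes "x \<in> improving" "mu' x = Some c"
  shows "c \<in> C" "mu x \<noteq> Some c" "card (assigned S mu c) = q c"
    and "\<forall>t\<in>assigned S mu c. pc c (Some t) (Some x)"
proof -
  have x: "x \<in> S" "ps x (Some c) (mu x)" using assms unfolding improving_def by auto
  show "c \<in> C" using improving_matched[OF assms(1)] assms(2) by auto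
  then show "mu x \<noteq> Some c"
    using x(2) strict_total_on_irrefl[OF market_student_order[OF market x(1)], of "Some c"] by auto
  have "likes pc c x"
    using stable' x(1) assms(2) \<open>c \<in> C\<close>
    unfolding stable_def individually_rational_def assigned_def by blast
  then show "card (assigned S mu c) = q c" "\<forall>t\<in>assigned S mu c. pc c (Some t) (Some x)"
    using stable_envied_college[OF market stable x(1) \<open>c \<in> C\<close> x(2)] by blast+
qed

lemma arrivals_subset: "arrivals c \<subseteq> assigned S mu' c - assigned S mu c"
  using improving_target(2) unfolding arrivals_def assigned_def improving_def by blast

lemma departures_improving:
  assumes "arrivals c \<noteq> {}"
  shows "departures c \<subseteq> improving"
proof
  fix t assume t: "t \<in> departures c"
  then have "t \<in> S" "mu t = Some c" "mu' t \<noteq> Some c"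
    unfolding departures_def assigned_def by auto
  obtain x where x: "x \<in> improving" "mu' x = Some c" using assms unfolding arrivals_def by blast
  have "x \<in> assigned S mu' c" using x unfolding improving_def assigned_def by auto
  moreover have "pc c (Some t) (Some x)"
    using improving_target(4)[OF x] \<open>t \<in> S\<close> \<open>mu t = Some c\<close> unfolding assigned_def by blast
  ultimately have "ps t (mu' t) (Some c)"
    using stable_student_prefers_partner[OF market stable' \<open>t \<in> S\<close> improving_target(1)[OF x]]
      \<open>mu' t \<noteq> Some c\<close> by blast
  then show "t \<in> improving" using \<open>t \<in> S\<close> \<open>mu t = Some c\<close> unfolding improving_def by simp
qed

lemma card_arrivals_le_departures: "card (arrivals c) \<le> card (departures c)"
proof (cases "arrivals c = {}")
  case False
  then obtain x where x: "x \<in> improving" "mu' x = Some c" unfolding arrivals_def by blast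
  have "card (assigned S mu' c) \<le> q c"
    using stable_within_capacity[OF stable' improving_target(1)[OF x]] .
  then have "card (assigned S mu' c) \<le> card (assigned S mu c)"
    using improving_target(3)[OF x] by simp
  then have "card (assigned S mu' c - assigned S mu c) \<le> card (departures c)"
    unfolding departures_def by (simp add: card_Diff_le_card_Diff_iff finite_assigned[OF finite_S])
  moreover have "card (arrivals c) \<le> card (assigned S mu' c - assigned S mu c)"
    using arrivals_subset by (intro card_mono) (simp_all add: finite_assigned[OF finite_S])
  ultimately show ?thesis by linarith
qed simp

lemma exchange_permutation:
  obtains f where "bij_betw f improving improving" "\<And>x. x \<in> improving \<Longrightarrow> mu (f x) = mu' x"
proof -
  have "finite (departures c)" for c
    unfolding departures_def by (rule finite_Diff, rule finite_assigned[OF finite_S])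
  then have "\<exists>h. h ` arrivals c \<subseteq> departures c \<and> inj_on h (arrivals c)" for c
    by (rule card_le_inj[OF finite_arrivals _ card_arrivals_le_departures])
  then obtain g where g: "\<And>c. g c ` arrivals c \<subseteq> departures c" "\<And>c. inj_on (g c) (arrivals c)"
    by metis
  define f where "f x = g (the (mu' x)) x" for x
  have arrival: "x \<in> arrivals (the (mu' x))" "mu' x = Some (the (mu' x))" if "x \<in> improving" for x
    using improving_matched[OF that] that unfolding arrivals_def by auto
  have f_departs: "f x \<in> departures (the (mu' x))" if "x \<in> improving" for x
    using g(1) arrival(1)[OF that] unfolding f_def by blast
  have f_seat: "mu (f x) = mu' x" if "x \<in> improving" for x
    using f_departs[OF that] arrival(2)[OF that] unfolding departures_def assigned_def by auto
  have into: "f ` improving \<subseteq> improving"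
  proof
    fix y assume "y \<in> f ` improving"
    then obtain x where x: "x \<in> improving" "y = f x" by blast
    have "arrivals (the (mu' x)) \<noteq> {}" using arrival(1)[OF x(1)] by blast
    then show "y \<in> improving" using departures_improving f_departs[OF x(1)] x(2) by blast
  qed
  have inj: "inj_on f improving"
  proof (rule inj_onI)
    fix x y assume xy: "x \<in> improving" "y \<in> improving" "f x = f y"
    then have same: "the (mu' x) = the (mu' y)" using f_seat by metis
    then have "g (the (mu' x)) x = g (the (mu' x)) y" using xy(3) unfolding f_def by simp
    then show "x = y"
      using inj_onD[OF g(2)] arrival(1)[OF xy(1)] arrival(1)[OF xy(2)] same by metis
  qed
  show thesis
  proof
    show "bij_betw f improving improving"
      using endo_inj_surj[OF finite_improving into inj] inj unfolding bij_betw_def by blast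
  qed (rule f_seat)
qed

lemma improving_fills_college:
  assumes "x \<in> improving" "mu' x = Some c"
  shows "card (assigned S mu' c) = q c"
proof -
  obtain f where f: "bij_betw f improving improving" "\<And>x. x \<in> improving \<Longrightarrow> mu (f x) = mu' x"
    using exchange_permutation by blast
  have "departures c \<subseteq> f ` arrivals c"
  proof
    fix t assume t: "t \<in> departures c"
    have "arrivals c \<noteq> {}" using assms unfolding arrivals_def by blast
    then have "t \<in> improving" using departures_improving t by blast
    then obtain y where y: "y \<in> improving" "t = f y" using f(1) unfolding bij_betw_def by blast
    have "mu' y = Some c" using f(2)[OF y(1)] y(2) t unfolding departures_def assigned_def by simp
    then show "t \<in> f ` arrivals c" using y unfolding arrivals_def by blast
  qed
  then have "card (departures c) \<le> card (f ` arrivals c)"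
    by (intro card_mono finite_imageI finite_arrivals)
  also have "\<dots> \<le> card (arrivals c)" by (rule card_image_le[OF finite_arrivals])
  also have "\<dots> \<le> card (assigned S mu' c - assigned S mu c)"
    using arrivals_subset by (intro card_mono) (simp_all add: finite_assigned[OF finite_S])
  finally have "card (assigned S mu c) \<le> card (assigned S mu' c)"
    unfolding departures_def by (simp add: card_Diff_le_card_Diff_iff finite_assigned[OF finite_S])
  moreover have "card (assigned S mu' c) \<le> q c"
    using stable_within_capacity[OF stable' improving_target(1)[OF assms]] .
  ultimately show ?thesis using improving_target(3)[OF assms] by simp
qed

abbreviation seat_exchange :: "'s \<Rightarrow> 's \<Rightarrow> bool" where
  "seat_exchange x y \<equiv> mu y = mu' x"

lemma improving_on_closed_walk:
  assumes "s \<in> improving"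
  obtains ws where "closed_walk seat_exchange ws" "hd ws = s" "set ws \<subseteq> improving"
    and "distinct (map mu' ws)"
proof -
  obtain f where f: "bij_betw f improving improving" "\<And>x. x \<in> improving \<Longrightarrow> mu (f x) = mu' x"
    using exchange_permutation by blast
  obtain n where n: "n > 0" "(f ^^ n) s = s"
    using bij_betw_funpow_cycle[OF finite_improving f(1) assms] by blast
  have orbit: "(f ^^ k) s \<in> improving" for k
    using bij_betw_apply[OF bij_betw_funpow[OF f(1)] assms] .
  let ?orb = "map (\<lambda>k. (f ^^ k) s) [0..<n]"
  have "closed_walk seat_exchange ?orb"
    using n f(2)[OF orbit] by (intro closed_walk_funpow) auto
  moreover have "hd ?orb = s" "set ?orb \<subseteq> improving" using n(1) orbit by (auto simp: hd_map)
  ultimately show thesis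
    using closed_walk_distinct_labels[of seat_exchange ?orb mu'] that by fastforce
qed

lemma pref_cycle_of_closed_walk:
  assumes walk: "closed_walk seat_exchange ws" and sub: "set ws \<subseteq> improving"
    and dist: "distinct (map mu' ws)"
  defines "cs \<equiv> map (the \<circ> mu') ws"
  shows "pref_cycle S C ps pc ws cs" "S_dominated mu ws cs" "S_dominating mu' ws cs"
    and "\<forall>c\<in>set cs. card (assigned S mu c) = q c \<and> card (assigned S mu' c) = q c"
proof -
  let ?n = "length ws"
  let ?pred = "\<lambda>i. (i + ?n - 1) mod ?n"
  have ws_i: "ws ! i \<in> improving" if "i < ?n" for i using sub that by auto
  have cs_i: "mu' (ws ! i) = Some (cs ! i)" "cs ! i \<in> C" if "i < ?n" for i
    using improving_matched[OF ws_i[OF that]] that unfolding cs_def by auto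
  have len: "length cs = ?n" unfolding cs_def by simp
  have seats: "map mu' ws = map Some cs"
    using cs_i(1) len by (intro nth_equalityI) auto
  show dominating: "S_dominating mu' ws cs"
    unfolding S_dominating_def using cs_i(1) by blast
  have pred: "mu (ws ! i) = Some (cs ! ?pred i)" if "i < ?n" for i
  proof -
    have "?pred i < ?n" using that by (intro mod_less_divisor) linarith
    then show ?thesis using closed_walk_nth_pred[OF walk that] cs_i(1)[of "?pred i"] by simp
  qed
  then show "S_dominated mu ws cs" unfolding S_dominated_def by blast
  show "pref_cycle S C ps pc ws cs"
    unfolding pref_cycle_def
  proof (intro conjI allI impI)
    show "ws \<noteq> []" using walk unfolding closed_walk_def by blast
    show "length cs = ?n" by (rule len)
    show "distinct ws" using dist by (simp add: distinct_map)
    show "distinct cs" using dist seats by (simp add: distinct_map)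
    show "set ws \<subseteq> S" using sub unfolding improving_def by blast
    show "set cs \<subseteq> C" using cs_i(2) len by (auto simp: in_set_conv_nth)
  next
    fix i assume i: "i < ?n"
    show "ps (ws ! i) (Some (cs ! i)) (Some (cs ! ?pred i))"
      using ws_i[OF i] cs_i(1)[OF i] pred[OF i] unfolding improving_def by simp
    have "(i + 1) mod ?n < ?n" using i by (intro mod_less_divisor) linarith
    then have "ws ! ((i + 1) mod ?n) \<in> assigned S mu (cs ! i)"
      using closed_walk_nth[OF walk i] cs_i(1)[OF i] ws_i unfolding assigned_def improving_def
      by simp
    then show "pc (cs ! i) (Some (ws ! ((i + 1) mod ?n))) (Some (ws ! i))"
      using improving_target(4)[OF ws_i[OF i] cs_i(1)[OF i]] by blast
  qed
  show "\<forall>c\<in>set cs. card (assigned S mu c) = q c \<and> card (assigned S mu' c) = q c"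
  proof
    fix c assume "c \<in> set cs"
    then obtain i where i: "i < ?n" "c = cs ! i" using len by (auto simp: in_set_conv_nth)
    then show "card (assigned S mu c) = q c \<and> card (assigned S mu' c) = q c"
      using improving_target(3)[OF ws_i[OF i(1)] cs_i(1)[OF i(1)]]
        improving_fills_college[OF ws_i[OF i(1)] cs_i(1)[OF i(1)]] by simp
  qed
qed

end

theorem lemma3:
  fixes S :: "'s set" and C :: "'c set"
    and ps :: "'s \<Rightarrow> 'c option \<Rightarrow> 'c option \<Rightarrow> bool"
    and pc :: "'c \<Rightarrow> 's option \<Rightarrow> 's option \<Rightarrow> bool"
    and q :: "'c \<Rightarrow> nat"
    and mu mu' :: "'s \<Rightarrow> 'c option"
  assumes "market S C ps pc q"
    and "stable S C ps pc q mu"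
    and "stable S C ps pc q mu'"
    and "s \<in> S"
    and "ps s (mu' s) (mu s)"
  shows "\<exists>ss cs. pref_cycle S C ps pc ss cs \<and> s \<in> set ss \<and>
           S_dominated mu ss cs \<and> S_dominating mu' ss cs \<and>
           (\<forall>c\<in>set cs. card (assigned S mu c) = q c \<and> card (assigned S mu' c) = q c)"
proof -
  interpret two_stable_matchings S C ps pc q mu mu'
    using assms(1-3) by unfold_locales
  have "s \<in> improving" using assms(4,5) unfolding improving_def by blast
  then obtain ws where ws: "closed_walk seat_exchange ws" "hd ws = s" "set ws \<subseteq> improving"
    "distinct (map mu' ws)"
    by (rule improving_on_closed_walk)
  then have "s \<in> set ws" unfolding closed_walk_def by (metis hd_in_set)
  then show ?thesis
    using pref_cycle_of_closed_walk[OF ws(1,3,4)] by blast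
qed

end
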